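(* Under the setting and recursive definitions of $\mu^*_l$ and $\sigma^{*2}_l$ below, for every $l=1,\dots,L$ and every $i=1,\dots,n_l$, $$\mu^*_l(\mathbf x^{[l]}_i)=y^{[l]}_i\quad\text{and}\quad\sigma^{*2}_l(\mathbf x^{[l]}_i)=0.$$
   Context: Fix $L\ge2$, $d\ge1$. For $l=1,\dots,L$ let $\mathcal X_l=\{\mathbf x^{[l]}_1,\dots,\mathbf x^{[l]}_{n_l}\}\subset\mathbb R^d$ be nested designs with distinct points, $\mathcal X_L\subseteq\cdots\subseteq\mathcal X_1$, with $\mathbf x^{[l]}_i=\mathbf x^{[l-1]}_i$ for $i\le n_l$, and let $\mathbf y_l=(y^{[l]}_1,\dots,y^{[l]}_{n_l})^T$ be observed outputs. Parameters: $\alpha_l\in\mathbb R$, $\tau_l^2>0$, $\theta_{lj}>0$, $\theta_{ly}>0$. Kernels: $K_1(\mathbf x,\mathbf x')=\prod_{j=1}^d\exp(-(x_j-x_j')^2/\theta_{1j})$; for $l\ge2$, $K_l((\mathbf x,y),(\mathbf x',y'))=\exp(-(y-y')^2/\theta_{ly})\prod_{j=1}^d\exp(-(x_j-x_j')^2/\theta_{lj})$. Matrices $\mathbf K_1=(K_1(\mathbf x^{[1]}_i,\mathbf x^{[1]}_k))$, $\mathbf K_l=(K_l((\mathbf x^{[l]}_i,y^{[l-1]}_i),(\mathbf x^{[l]}_k,y^{[l-1]}_k)))$ ($l\ge2$), assumed invertible; $r_i=(\mathbf K_l^{-1}(\mathbf y_l-\alpha_l\mathbf 1_{n_l}))_i$.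 Define $\mu_1^*(\mathbf x)=\alpha_1+\mathbf k_1(\mathbf x)^T\mathbf K_1^{-1}(\mathbf y_1-\alpha_1\mathbf 1_{n_1})$, $\sigma_1^{*2}(\mathbf x)=\tau_1^2(1-\mathbf k_1(\mathbf x)^T\mathbf K_1^{-1}\mathbf k_1(\mathbf x))$ with $(\mathbf k_1(\mathbf x))_i=K_1(\mathbf x,\mathbf x^{[1]}_i)$, and for $l\ge2$ recursively $\mu^*_l(\mathbf x)=\alpha_l+\sum_{i=1}^{n_l}r_i\prod_{j}\exp(-(x_j-x^{[l]}_{ij})^2/\theta_{lj})\,(1+2\sigma^{*2}_{l-1}(\mathbf x)/\theta_{ly})^{-1/2}\exp(-(y^{[l-1]}_i-\mu^*_{l-1}(\mathbf x))^2/(\theta_{ly}+2\sigma^{*2}_{l-1}(\mathbf x)))$, $\sigma^{*2}_l(\mathbf x)=\tau_l^2-(\mu^*_l(\mathbf x)-\alpha_l)^2+\sum_{i,k=1}^{n_l}\zeta_{ik}(r_ir_k-\tau_l^2(\mathbf K_l^{-1})_{ik})\prod_j\exp(-((x_j-x^{[l]}_{ij})^2+(x_j-x^{[l]}_{kj})^2)/\theta_{lj})$, with $\zeta_{ik}=(1+4\sigma^{*2}_{l-1}(\mathbf x)/\theta_{ly})^{-1/2}\exp\big(-(\tfrac{y^{[l-1]}_i+y^{[l-1]}_k}{2}-\mu^*_{l-1}(\mathbf x))^2/(\theta_{ly}/2+2\sigma^{*2}_{l-1}(\mathbf x))-(y^{[l-1]}_i-y^{[l-1]}_k)^2/(2\theta_{ly})\big)$.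 Here $x^{[l]}_{ij}$ is the $j$-th coordinate of $\mathbf x^{[l]}_i$. *)

theory Defs
  imports Complex_Main "Jordan_Normal_Form.Matrix"
begin

text \<open>Levels are numbered 1..L; design indices are 0-based: point i of level l is X l i, i < n l;
 output y_i^[l] is Y l i.  theta l j = theta_{lj}, thetay l = theta_{ly}.\<close>

definition gkern :: "('d::finite \<Rightarrow> real) \<Rightarrow> ('d \<Rightarrow> real) \<Rightarrow> ('d \<Rightarrow> real) \<Rightarrow> real" where
  "gkern th x x' = (\<Prod>j\<in>UNIV. exp (- ((x j - x' j)^2) / th j))"

definition Kmat :: "(nat \<Rightarrow> nat) \<Rightarrow> (nat \<Rightarrow> nat \<Rightarrow> ('d::finite \<Rightarrow> real)) \<Rightarrow> (nat \<Rightarrow> nat \<Rightarrow> real)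
    \<Rightarrow> (nat \<Rightarrow> 'd \<Rightarrow> real) \<Rightarrow> (nat \<Rightarrow> real) \<Rightarrow> nat \<Rightarrow> real mat" where
  "Kmat n X Y theta thetay l =
     (if l = 1 then mat (n 1) (n 1) (\<lambda>(i,k). gkern (theta 1) (X 1 i) (X 1 k))
      else mat (n l) (n l) (\<lambda>(i,k). exp (- ((Y (l-1) i - Y (l-1) k)^2) / thetay l)
                                     * gkern (theta l) (X l i) (X l k)))"

definition mat_inv :: "real mat \<Rightarrow> real mat" where
  "mat_inv A = (SOME B. inverts_mat A B \<and> inverts_mat B A)"

definition rvec :: "(nat \<Rightarrow> nat) \<Rightarrow> (nat \<Rightarrow> nat \<Rightarrow> ('d::finite \<Rightarrow> real)) \<Rightarrow> (nat \<Rightarrow> nat \<Rightarrow> real)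
    \<Rightarrow> (nat \<Rightarrow> real) \<Rightarrow> (nat \<Rightarrow> 'd \<Rightarrow> real) \<Rightarrow> (nat \<Rightarrow> real) \<Rightarrow> nat \<Rightarrow> real vec" where
  "rvec n X Y alpha theta thetay l =
     mat_inv (Kmat n X Y theta thetay l) *\<^sub>v vec (n l) (\<lambda>i. Y l i - alpha l)"

text \<open>musig ... l x = (mu*_l(x), sigma*^2_l(x)); level 0 is unused junk.\<close>
fun musig :: "(nat \<Rightarrow> nat) \<Rightarrow> (nat \<Rightarrow> nat \<Rightarrow> ('d::finite \<Rightarrow> real)) \<Rightarrow> (nat \<Rightarrow> nat \<Rightarrow> real)
    \<Rightarrow> (nat \<Rightarrow> real) \<Rightarrow> (nat \<Rightarrow> real) \<Rightarrow> (nat \<Rightarrow> 'd \<Rightarrow> real) \<Rightarrow> (nat \<Rightarrow> real)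
    \<Rightarrow> nat \<Rightarrow> ('d \<Rightarrow> real) \<Rightarrow> real \<times> real" where
  "musig n X Y alpha tau2 theta thetay 0 x = (0, 0)"
| "musig n X Y alpha tau2 theta thetay (Suc 0) x =
    (let Ki = mat_inv (Kmat n X Y theta thetay 1);
         r = rvec n X Y alpha theta thetay 1;
         kv = (\<lambda>i. gkern (theta 1) x (X 1 i))
     in (alpha 1 + (\<Sum>i<n 1. kv i * r $ i),
         tau2 1 * (1 - (\<Sum>i<n 1. \<Sum>k<n 1. kv i * Ki $$ (i,k) * kv k))))"
| "musig n X Y alpha tau2 theta thetay (Suc (Suc m)) x =
    (let l = Suc (Suc m);
         (mp, sp) = musig n X Y alpha tau2 theta thetay (Suc m) x;
         Ki = mat_inv (Kmat n X Y theta thetay l);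
         r = rvec n X Y alpha theta thetay l;
         mu = alpha l + (\<Sum>i<n l. r $ i * (\<Prod>j\<in>UNIV. exp (- ((x j - X l i j)^2) / theta l j))
                 * (1 / sqrt (1 + 2 * sp / thetay l))
                 * exp (- ((Y (l-1) i - mp)^2) / (thetay l + 2 * sp)));
         zeta = (\<lambda>i k. (1 / sqrt (1 + 4 * sp / thetay l))
                 * exp (- (((Y (l-1) i + Y (l-1) k) / 2 - mp)^2) / (thetay l / 2 + 2 * sp)
                        - (Y (l-1) i - Y (l-1) k)^2 / (2 * thetay l)))
     in (mu,
         tau2 l - (mu - alpha l)^2
          + (\<Sum>i<n l. \<Sum>k<n l. zeta i k * (r $ i * r $ k - tau2 l * Ki $$ (i,k))
               * (\<Prod>j\<in>UNIV. exp (- ((x j - X l i j)^2 + (x j - X l k j)^2) / theta l j)))))"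

end

theory Submission
  imports Defs
begin

(* By nestedness a level-l design point x_i is also a design point of level l - 1, where by
   induction the emulator is exact: mu*_{l-1}(x_i) = y_i and sigma*^2_{l-1}(x_i) = 0.  With zero
   input variance the Gaussian smoothing in mu*_l and sigma*^2_l disappears and both reduce to
   ordinary kriging at a node: the kernel vector k is the i-th row of the symmetric unit-diagonal
   matrix K_l, so k^T K^-1 (y - alpha) = y_i - alpha and k^T K^-1 k = (K K^-1 K)_ii = 1. *)

lemma mat_inv_right_inverse:
  assumes "invertible_mat K" "K \<in> carrier_mat N N"
  shows "mat_inv K \<in> carrier_mat N N" "K * mat_inv K = 1\<^sub>m N"
proof -
  from assms(1) obtain B where "inverts_mat K B \<and> inverts_mat B K"
    unfolding invertible_mat_def by blast
  then have "inverts_mat K (mat_inv K) \<and> inverts_mat (mat_inv K) K"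
    unfolding mat_inv_def by (rule someI)
  then have right: "K * mat_inv K = 1\<^sub>m N" and left: "mat_inv K * K = 1\<^sub>m (dim_row (mat_inv K))"
    using assms(2) unfolding inverts_mat_def by auto
  from right have "dim_col (mat_inv K) = N"
    by (metis index_mult_mat(3) index_one_mat(3))
  moreover from left have "dim_row (mat_inv K) = N"
    using assms(2) by (metis carrier_matD(2) index_mult_mat(3) index_one_mat(3))
  ultimately show "mat_inv K \<in> carrier_mat N N" by auto
  show "K * mat_inv K = 1\<^sub>m N" by (fact right)
qed

lemma row_sum_mult_right_inverse_vec:
  fixes K Ki :: "'a::comm_ring_1 mat"
  assumes "K \<in> carrier_mat N N" "Ki \<in> carrier_mat N N" "K * Ki = 1\<^sub>m N"
    and "i < N" "w \<in> carrier_vec N"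
  shows "(\<Sum>k<N. K $$ (i,k) * (Ki *\<^sub>v w) $ k) = w $ i"
proof -
  have "K *\<^sub>v (Ki *\<^sub>v w) = w"
    using assms by (simp add: assoc_mult_mat_vec[symmetric, of K N N Ki N w])
  then have "(K *\<^sub>v (Ki *\<^sub>v w)) $ i = w $ i" by simp
  then show ?thesis
    using assms by (simp add: scalar_prod_def lessThan_atLeast0)
qed

lemma row_inverse_row_sum:
  fixes K Ki :: "'a::comm_ring_1 mat"
  assumes K: "K \<in> carrier_mat N N" and Ki: "Ki \<in> carrier_mat N N" and inv: "K * Ki = 1\<^sub>m N"
    and sym: "\<And>a b. a < N \<Longrightarrow> b < N \<Longrightarrow> K $$ (a,b) = K $$ (b,a)"
    and i: "i < N"
  shows "(\<Sum>k<N. \<Sum>m<N. K $$ (i,k) * Ki $$ (k,m) * K $$ (i,m)) = K $$ (i,i)"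
proof -
  have "K $$ (i,i) = (K * Ki * K) $$ (i,i)"
    using inv K by simp
  also have "\<dots> = (\<Sum>k<N. \<Sum>m<N. K $$ (i,k) * Ki $$ (k,m) * K $$ (m,i))"
    using K Ki i by (simp add: scalar_prod_def lessThan_atLeast0 sum_distrib_left mult.assoc)
  also have "\<dots> = (\<Sum>k<N. \<Sum>m<N. K $$ (i,k) * Ki $$ (k,m) * K $$ (i,m))"
    using sym i by simp
  finally show ?thesis ..
qed

lemma row_variance_sum_right_inverse:
  fixes K Ki :: "'a::comm_ring_1 mat"
  assumes K: "K \<in> carrier_mat N N" and Ki: "Ki \<in> carrier_mat N N" and inv: "K * Ki = 1\<^sub>m N"
    and sym: "\<And>a b. a < N \<Longrightarrow> b < N \<Longrightarrow> K $$ (a,b) = K $$ (b,a)"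
    and i: "i < N" and w: "w \<in> carrier_vec N"
  shows "(\<Sum>k<N. \<Sum>m<N. K $$ (i,k) * K $$ (i,m) * ((Ki *\<^sub>v w) $ k * (Ki *\<^sub>v w) $ m - t * Ki $$ (k,m)))
       = (w $ i)^2 - t * K $$ (i,i)"
proof -
  define r where "r = Ki *\<^sub>v w"
  have "(\<Sum>k<N. \<Sum>m<N. K $$ (i,k) * K $$ (i,m) * (r $ k * r $ m - t * Ki $$ (k,m)))
      = (\<Sum>k<N. K $$ (i,k) * r $ k) * (\<Sum>m<N. K $$ (i,m) * r $ m)
        - t * (\<Sum>k<N. \<Sum>m<N. K $$ (i,k) * Ki $$ (k,m) * K $$ (i,m))"
    by (simp add: sum_product sum_distrib_left sum_subtractf algebra_simps)
  then show ?thesis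
    using row_sum_mult_right_inverse_vec[OF K Ki inv i w] row_inverse_row_sum[OF K Ki inv sym i]
    by (simp add: r_def power2_eq_square)
qed

lemma gkern_commute: "gkern th x y = gkern th y x"
  unfolding gkern_def by (simp add: power2_commute)

lemma gkern_self: "gkern th x x = 1"
  unfolding gkern_def by simp

lemma Kmat_carrier: "Kmat n X Y theta thetay l \<in> carrier_mat (n l) (n l)"
  by (simp add: Kmat_def)

lemma Kmat_sym:
  "i < n l \<Longrightarrow> k < n l \<Longrightarrow> Kmat n X Y theta thetay l $$ (i,k) = Kmat n X Y theta thetay l $$ (k,i)"
  by (auto simp: Kmat_def power2_commute gkern_commute[of _ "X _ i"])

lemma Kmat_diag: "i < n l \<Longrightarrow> Kmat n X Y theta thetay l $$ (i,i) = 1"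
  by (cases "l = 1") (simp_all add: Kmat_def gkern_self)

(* zeta_ik at sigma*^2 = 0, in the literal shape of the definition *)
lemma zeta_at_zero_variance:
  fixes a b c t :: real
  assumes "t \<noteq> 0"
  shows "1 / sqrt (1 + 4 * 0 / t) * exp (- ((a + b) / 2 - c)\<^sup>2 / (t / 2 + 2 * 0) - (a - b)\<^sup>2 / (2 * t))
       = exp (- ((c - a)^2) / t) * exp (- ((c - b)^2) / t)"
proof -
  have "- ((a + b) / 2 - c)\<^sup>2 / (t / 2) - (a - b)\<^sup>2 / (2 * t) = - ((c - a)^2) / t + - ((c - b)^2) / t"
    using assms by (simp add: field_simps) (simp add: power2_eq_square algebra_simps)
  then show ?thesis by (simp add: exp_add[symmetric])
qed

lemma prod_exp_add_sq:
  "(\<Prod>j\<in>A. exp (- ((p j)\<^sup>2 + (q j)\<^sup>2) / (t j :: real)))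
   = (\<Prod>j\<in>A. exp (- ((p j)\<^sup>2) / t j)) * (\<Prod>j\<in>A. exp (- ((q j)\<^sup>2) / t j))"
  by (simp add: prod.distrib[symmetric] exp_add[symmetric] diff_divide_distrib)

lemma musig_1_at_node:
  fixes n :: "nat \<Rightarrow> nat" and X :: "nat \<Rightarrow> nat \<Rightarrow> ('d::finite \<Rightarrow> real)" and Y :: "nat \<Rightarrow> nat \<Rightarrow> real"
    and alpha tau2 thetay :: "nat \<Rightarrow> real" and theta :: "nat \<Rightarrow> 'd \<Rightarrow> real"
  defines "K \<equiv> Kmat n X Y theta thetay 1" and "r \<equiv> rvec n X Y alpha theta thetay 1"
  assumes "i < n 1"
  shows "musig n X Y alpha tau2 theta thetay 1 (X 1 i)
       = (alpha 1 + (\<Sum>k<n 1. K $$ (i,k) * r $ k),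
          tau2 1 * (1 - (\<Sum>k<n 1. \<Sum>m<n 1. K $$ (i,k) * mat_inv K $$ (k,m) * K $$ (i,m))))"
  using assms by (simp add: Kmat_def Let_def)

lemma musig_at_node_ge2:
  fixes n :: "nat \<Rightarrow> nat" and X :: "nat \<Rightarrow> nat \<Rightarrow> ('d::finite \<Rightarrow> real)" and Y :: "nat \<Rightarrow> nat \<Rightarrow> real"
    and alpha tau2 thetay :: "nat \<Rightarrow> real" and theta :: "nat \<Rightarrow> 'd \<Rightarrow> real"
    and l :: nat
  defines "K \<equiv> Kmat n X Y theta thetay l" and "r \<equiv> rvec n X Y alpha theta thetay l"
  assumes l: "2 \<le> l" and i: "i < n l" and thetay: "thetay l \<noteq> 0"
    and prev: "musig n X Y alpha tau2 theta thetay (l - 1) (X l i) = (Y (l - 1) i, 0)"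
  shows "musig n X Y alpha tau2 theta thetay l (X l i)
       = (alpha l + (\<Sum>k<n l. K $$ (i,k) * r $ k),
          tau2 l - (\<Sum>k<n l. K $$ (i,k) * r $ k)^2
          + (\<Sum>k<n l. \<Sum>k'<n l. K $$ (i,k) * K $$ (i,k') * (r $ k * r $ k' - tau2 l * mat_inv K $$ (k,k'))))"
proof -
  obtain m where l_eq: "l = Suc (Suc m)"
    using l by (metis add_2_eq_Suc le_Suc_ex)
  have entry: "K $$ (i,k) = exp (- ((Y (l - 1) k - Y (l - 1) i)^2) / thetay l)
      * (\<Prod>j\<in>UNIV. exp (- ((X l i j - X l k j)^2) / theta l j))" if "k < n l" for k
    using l i that by (simp add: K_def Kmat_def gkern_def power2_commute)
  have mean_sum: "(\<Sum>k<n l. r $ k * (\<Prod>j\<in>UNIV. exp (- ((X l i j - X l k j)^2) / theta l j))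
      * (1 / sqrt (1 + 2 * 0 / thetay l)) * exp (- ((Y (l - 1) k - Y (l - 1) i)^2) / (thetay l + 2 * 0)))
      = (\<Sum>k<n l. K $$ (i,k) * r $ k)"
    by (rule sum.cong) (simp_all add: entry)
  have variance_sum: "(\<Sum>k<n l. \<Sum>k'<n l. 1 / sqrt (1 + 4 * 0 / thetay l)
      * exp (- (((Y (l - 1) k + Y (l - 1) k') / 2 - Y (l - 1) i)^2) / (thetay l / 2 + 2 * 0)
             - (Y (l - 1) k - Y (l - 1) k')^2 / (2 * thetay l))
      * (r $ k * r $ k' - tau2 l * mat_inv K $$ (k,k'))
      * (\<Prod>j\<in>UNIV. exp (- ((X l i j - X l k j)^2 + (X l i j - X l k' j)^2) / theta l j)))
      = (\<Sum>k<n l. \<Sum>k'<n l. K $$ (i,k) * K $$ (i,k') * (r $ k * r $ k' - tau2 l * mat_inv K $$ (k,k')))"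
    unfolding zeta_at_zero_variance[OF thetay] prod_exp_add_sq
    by (intro sum.cong refl) (simp add: entry mult_ac power2_commute)
  have "musig n X Y alpha tau2 theta thetay l (X l i)
      = (alpha l + (\<Sum>k<n l. r $ k * (\<Prod>j\<in>UNIV. exp (- ((X l i j - X l k j)^2) / theta l j))
            * (1 / sqrt (1 + 2 * 0 / thetay l)) * exp (- ((Y (l - 1) k - Y (l - 1) i)^2) / (thetay l + 2 * 0))),
         tau2 l - (\<Sum>k<n l. r $ k * (\<Prod>j\<in>UNIV. exp (- ((X l i j - X l k j)^2) / theta l j))
            * (1 / sqrt (1 + 2 * 0 / thetay l)) * exp (- ((Y (l - 1) k - Y (l - 1) i)^2) / (thetay l + 2 * 0)))^2
         + (\<Sum>k<n l. \<Sum>k'<n l. 1 / sqrt (1 + 4 * 0 / thetay l)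
            * exp (- (((Y (l - 1) k + Y (l - 1) k') / 2 - Y (l - 1) i)^2) / (thetay l / 2 + 2 * 0)
                   - (Y (l - 1) k - Y (l - 1) k')^2 / (2 * thetay l))
            * (r $ k * r $ k' - tau2 l * mat_inv K $$ (k,k'))
            * (\<Prod>j\<in>UNIV. exp (- ((X l i j - X l k j)^2 + (X l i j - X l k' j)^2) / theta l j))))"
    using prev unfolding K_def r_def l_eq by (simp add: Let_def)
  also have "\<dots> = (alpha l + (\<Sum>k<n l. K $$ (i,k) * r $ k),
          tau2 l - (\<Sum>k<n l. K $$ (i,k) * r $ k)^2
          + (\<Sum>k<n l. \<Sum>k'<n l. K $$ (i,k) * K $$ (i,k') * (r $ k * r $ k' - tau2 l * mat_inv K $$ (k,k'))))"
    by (simp only: mean_sum variance_sum)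
  finally show ?thesis .
qed

lemma Kmat_interpolation:
  fixes n :: "nat \<Rightarrow> nat" and X :: "nat \<Rightarrow> nat \<Rightarrow> ('d::finite \<Rightarrow> real)" and Y :: "nat \<Rightarrow> nat \<Rightarrow> real"
    and alpha thetay :: "nat \<Rightarrow> real" and theta :: "nat \<Rightarrow> 'd \<Rightarrow> real" and l :: nat
  defines "K \<equiv> Kmat n X Y theta thetay l" and "r \<equiv> rvec n X Y alpha theta thetay l"
  assumes inv: "invertible_mat K" and i: "i < n l"
  shows "(\<Sum>k<n l. K $$ (i,k) * r $ k) = Y l i - alpha l"
    and "(\<Sum>k<n l. \<Sum>k'<n l. K $$ (i,k) * mat_inv K $$ (k,k') * K $$ (i,k')) = 1"
    and "(\<Sum>k<n l. \<Sum>k'<n l. K $$ (i,k) * K $$ (i,k') * (r $ k * r $ k' - t * mat_inv K $$ (k,k')))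
         = (Y l i - alpha l)^2 - t"
proof -
  have K: "K \<in> carrier_mat (n l) (n l)"
    unfolding K_def by (rule Kmat_carrier)
  note Ki = mat_inv_right_inverse[OF inv K]
  have sym: "\<And>a b. a < n l \<Longrightarrow> b < n l \<Longrightarrow> K $$ (a,b) = K $$ (b,a)"
    unfolding K_def by (rule Kmat_sym)
  have diag: "K $$ (i,i) = 1"
    unfolding K_def using i by (rule Kmat_diag)
  define w where "w = vec (n l) (\<lambda>k. Y l k - alpha l)"
  have w: "w \<in> carrier_vec (n l)" and wi: "w $ i = Y l i - alpha l"
    using i by (simp_all add: w_def)
  have r: "r = mat_inv K *\<^sub>v w"
    by (simp add: r_def rvec_def K_def w_def)
  show "(\<Sum>k<n l. K $$ (i,k) * r $ k) = Y l i - alpha l"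
    using row_sum_mult_right_inverse_vec[OF K Ki i w] by (simp add: r wi)
  show "(\<Sum>k<n l. \<Sum>k'<n l. K $$ (i,k) * mat_inv K $$ (k,k') * K $$ (i,k')) = 1"
    using row_inverse_row_sum[OF K Ki sym i] by (simp add: diag)
  show "(\<Sum>k<n l. \<Sum>k'<n l. K $$ (i,k) * K $$ (i,k') * (r $ k * r $ k' - t * mat_inv K $$ (k,k')))
         = (Y l i - alpha l)^2 - t"
    using row_variance_sum_right_inverse[OF K Ki sym i w] by (simp add: r wi diag)
qed

theorem proposition3p2:
  fixes L :: nat and n :: "nat \<Rightarrow> nat"
    and X :: "nat \<Rightarrow> nat \<Rightarrow> ('d::finite \<Rightarrow> real)" and Y :: "nat \<Rightarrow> nat \<Rightarrow> real"
    and alpha tau2 thetay :: "nat \<Rightarrow> real" and theta :: "nat \<Rightarrow> 'd \<Rightarrow> real"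
  assumes L2: "L \<ge> 2"
    and distinct: "\<And>l. 1 \<le> l \<Longrightarrow> l \<le> L \<Longrightarrow> inj_on (X l) {..<n l}"
    and nested_card: "\<And>l. 2 \<le> l \<Longrightarrow> l \<le> L \<Longrightarrow> n l \<le> n (l - 1)"
    and nested_pts: "\<And>l i. 2 \<le> l \<Longrightarrow> l \<le> L \<Longrightarrow> i < n l \<Longrightarrow> X l i = X (l - 1) i"
    and tau_pos: "\<And>l. 1 \<le> l \<Longrightarrow> l \<le> L \<Longrightarrow> tau2 l > 0"
    and theta_pos: "\<And>l j. 1 \<le> l \<Longrightarrow> l \<le> L \<Longrightarrow> theta l j > 0"
    and thetay_pos: "\<And>l. 2 \<le> l \<Longrightarrow> l \<le> L \<Longrightarrow> thetay l > 0"
    and K_inv: "\<And>l. 1 \<le> l \<Longrightarrow> l \<le> L \<Longrightarrow> invertible_mat (Kmat n X Y theta thetay l)"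
  shows "\<forall>l\<in>{1..L}. \<forall>i<n l.
           fst (musig n X Y alpha tau2 theta thetay l (X l i)) = Y l i \<and>
           snd (musig n X Y alpha tau2 theta thetay l (X l i)) = 0"
proof -
  have "musig n X Y alpha tau2 theta thetay l (X l i) = (Y l i, 0)"
    if "1 \<le> l" "l \<le> L" "i < n l" for l i
    using that
  proof (induction l arbitrary: i rule: nat_induct_at_least)
    case base
    then have "invertible_mat (Kmat n X Y theta thetay 1)" and "i < n 1"
      using K_inv[of 1] by simp_all
    then show ?case
      unfolding musig_1_at_node[where n=n, OF \<open>i < n 1\<close>] by (simp add: Kmat_interpolation)
  next
    case (Suc l)
    then have l: "2 \<le> Suc l" and i: "i < n (Suc l)" and "Suc l \<le> L"
      by simp_all
    then have prev: "musig n X Y alpha tau2 theta thetay (Suc l - 1) (X (Suc l) i) = (Y (Suc l - 1) i, 0)"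
      using Suc.IH nested_card[OF l] nested_pts[OF l] by simp
    have thetay: "thetay (Suc l) \<noteq> 0" and "invertible_mat (Kmat n X Y theta thetay (Suc l))"
      using thetay_pos[OF l] K_inv \<open>Suc l \<le> L\<close> by auto
    then show ?case
      unfolding musig_at_node_ge2[OF l i thetay prev] by (simp add: Kmat_interpolation i)
  qed
  then show ?thesis by simp
qed

end
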